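(* Let $X$, $Y$ be metrizable spaces, $f:X\to Y$, and let $\xi$ be a countable ordinal with $\xi>1$. The following are equivalent: (i) $f^{-1}(A)\in\mathbf{\Sigma}^0_\xi(X)$ for every $A\in\mathbf{\Sigma}^0_\xi(Y)$; (ii) $f^{-1}(A)\in\mathbf{\Pi}^0_\xi(X)$ for every $A\in\mathbf{\Pi}^0_\xi(Y)$; (iii) $f^{-1}(A)\in\mathbf{\Delta}^0_\xi(X)$ for every $A\in\mathbf{\Delta}^0_\xi(Y)$; (iv) $f^{-1}(A)\in\mathbf{\Sigma}^0_\xi(X)$ for every $\nu<\xi$ and every $A\in\mathbf{\Pi}^0_\nu(Y)$; (v) $f^{-1}(A)\in\mathbf{\Delta}^0_\xi(X)$ for every $\nu<\xi$ and every $A\in\mathbf{\Sigma}^0_\nu(Y)$.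
   Context: Work in ZF plus countable choice over the reals. $\mathbf{\Sigma}^0_\nu,\mathbf{\Pi}^0_\nu,\mathbf{\Delta}^0_\nu$ denote the levels of the Borel hierarchy, with the convention $\mathbf{\Sigma}^0_0=\mathbf{\Pi}^0_0=\mathbf{\Delta}^0_0=\mathbf{\Delta}^0_1$ (the clopen sets). *)

theory Defs
  imports "HOL-Analysis.Analysis"
begin

text \<open>Ordinals are represented as elements of an arbitrary well-ordered type 'o
  (class wellorder); a countable ordinal is an element with countably many predecessors.\<close>

definition ord_zero :: "'o::wellorder \<Rightarrow> bool" where
  "ord_zero \<nu> \<longleftrightarrow> (\<forall>\<mu>. \<not> \<mu> < \<nu>)"

definition ord_one :: "'o::wellorder \<Rightarrow> bool" where
  "ord_one \<nu> \<longleftrightarrow> \<not> ord_zero \<nu> \<and> (\<forall>\<mu>. \<mu> < \<nu> \<longrightarrow> ord_zero \<mu>)"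

definition borel_sigma_step ::
  "'a topology \<Rightarrow> ('o::wellorder \<Rightarrow> 'a set set) \<Rightarrow> 'o \<Rightarrow> 'a set set" where
  "borel_sigma_step X F \<nu> =
     (if ord_zero \<nu> then {A. openin X A \<and> closedin X A}
      else if ord_one \<nu> then {A. openin X A}
      else {\<Union> (range U) | U :: nat \<Rightarrow> 'a set.
              \<forall>n. \<exists>\<mu>. \<mu> < \<nu> \<and> \<not> ord_zero \<mu> \<and> (\<exists>B \<in> F \<mu>. U n = topspace X - B)})"

definition borel_Sigma :: "'a topology \<Rightarrow> 'o::wellorder \<Rightarrow> 'a set set" where
  "borel_Sigma X = wfrec {(\<mu>, \<nu>). \<mu> < \<nu>} (borel_sigma_step X)"

definition borel_Pi :: "'a topology \<Rightarrow> 'o::wellorder \<Rightarrow> 'a set set" where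
  "borel_Pi X \<nu> = {topspace X - A | A. A \<in> borel_Sigma X \<nu>}"

definition borel_Delta :: "'a topology \<Rightarrow> 'o::wellorder \<Rightarrow> 'a set set" where
  "borel_Delta X \<nu> = borel_Sigma X \<nu> \<inter> borel_Pi X \<nu>"

end

theory Submission
  imports Defs
begin

text \<open>For \<open>\<nu> < \<xi>\<close> every \<open>\<Sigma>\<^sub>\<nu>\<close> set of a metrizable space is \<open>\<Delta>\<^sub>\<xi>\<close>: for
  \<open>\<nu> \<ge> 2\<close> this is immediate from the definition, open sets are \<open>F\<^sub>\<sigma>\<close> in a metrizable
  space, and clopen sets are closed. So if \<open>f\<close> pulls \<open>\<Sigma>\<^sub>\<xi>\<close> back into \<open>\<Sigma>\<^sub>\<xi>\<close>, it pulls
  back \<open>\<Pi>\<^sub>\<xi>\<close> (by complementation) and hence \<open>\<Delta>\<^sub>\<xi>\<close>, and it sends every \<open>\<Sigma>\<^sub>\<nu>\<close>,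
  \<open>\<nu> < \<xi>\<close>, into \<open>\<Delta>\<^sub>\<xi>\<close>. Complementing once more, every \<open>\<Pi>\<^sub>\<nu>\<close> with \<open>\<nu> < \<xi>\<close> is
  pulled back into \<open>\<Sigma>\<^sub>\<xi>\<close>; since a \<open>\<Sigma>\<^sub>\<xi>\<close> set is a countable union of such sets and
  preimages commute with unions, this closes the cycle.\<close>

lemma ord_one_not_zero: "ord_one \<nu> \<Longrightarrow> \<not> ord_zero \<nu>"
  by (simp add: ord_one_def)

lemma ex_ord_one_less:
  fixes \<xi> :: "'o::wellorder"
  assumes "\<not> ord_zero \<xi>" "\<not> ord_one \<xi>"
  shows "\<exists>\<omega> < \<xi>. ord_one \<omega>"
proof -
  from assms obtain \<mu> where \<mu>: "\<mu> < \<xi>" "\<not> ord_zero \<mu>"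
    unfolding ord_one_def by blast
  define \<omega> :: 'o where "\<omega> = (LEAST \<mu>. \<not> ord_zero \<mu>)"
  have "\<omega> \<le> \<mu>"
    unfolding \<omega>_def using \<mu>(2) by (rule Least_le)
  then have "\<omega> < \<xi>"
    using \<mu>(1) by (rule le_less_trans)
  moreover have "\<not> ord_zero \<omega>"
    unfolding \<omega>_def using \<mu>(2) by (rule LeastI)
  moreover have "\<forall>\<mu>'. \<mu>' < \<omega> \<longrightarrow> ord_zero \<mu>'"
    unfolding \<omega>_def using not_less_Least by blast
  ultimately show ?thesis
    unfolding ord_one_def by blast
qed

lemma borel_Sigma_unfold: "borel_Sigma X \<nu> = borel_sigma_step X (borel_Sigma X) \<nu>"
proof -
  have "wf {(\<mu>, \<nu>). (\<mu>::'o::wellorder) < \<nu>}"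
    using wf by (simp add: wf_def)
  then have "borel_Sigma X \<nu> = borel_sigma_step X (cut (borel_Sigma X) {(\<mu>, \<nu>). \<mu> < \<nu>} \<nu>) \<nu>"
    unfolding borel_Sigma_def by (rule wfrec)
  also have "\<dots> = borel_sigma_step X (borel_Sigma X) \<nu>"
    unfolding borel_sigma_step_def by (simp add: cut_apply cong: conj_cong)
  finally show ?thesis .
qed

lemma borel_Sigma_zero: "ord_zero \<nu> \<Longrightarrow> borel_Sigma X \<nu> = {A. openin X A \<and> closedin X A}"
  by (subst borel_Sigma_unfold) (simp add: borel_sigma_step_def)

lemma borel_Sigma_one: "ord_one \<nu> \<Longrightarrow> borel_Sigma X \<nu> = {A. openin X A}"
  by (subst borel_Sigma_unfold) (simp add: borel_sigma_step_def ord_one_def)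

lemma borel_Sigma_iff:
  assumes "\<not> ord_zero \<nu>" "\<not> ord_one \<nu>"
  shows "A \<in> borel_Sigma X \<nu> \<longleftrightarrow>
    (\<exists>U::nat \<Rightarrow> 'a set. A = \<Union> (range U) \<and> (\<forall>n. \<exists>\<mu> < \<nu>. \<not> ord_zero \<mu> \<and> U n \<in> borel_Pi X \<mu>))"
  using assms by (subst borel_Sigma_unfold) (simp add: borel_sigma_step_def borel_Pi_def Bex_def conj_commute)

lemma borel_Sigma_subset_topspace: "A \<in> borel_Sigma X \<nu> \<Longrightarrow> A \<subseteq> topspace X"
  by (cases "ord_zero \<nu> \<or> ord_one \<nu>")
    (auto simp: borel_Sigma_zero borel_Sigma_one borel_Sigma_iff borel_Pi_def dest!: openin_subset)

lemma borel_Pi_iff: "B \<in> borel_Pi X \<nu> \<longleftrightarrow> B \<subseteq> topspace X \<and> topspace X - B \<in> borel_Sigma X \<nu>"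
proof
  assume "B \<in> borel_Pi X \<nu>"
  then obtain A where A: "A \<in> borel_Sigma X \<nu>" "B = topspace X - A"
    by (auto simp: borel_Pi_def)
  then show "B \<subseteq> topspace X \<and> topspace X - B \<in> borel_Sigma X \<nu>"
    using borel_Sigma_subset_topspace[OF A(1)] by (simp add: double_diff)
next
  assume "B \<subseteq> topspace X \<and> topspace X - B \<in> borel_Sigma X \<nu>"
  then show "B \<in> borel_Pi X \<nu>"
    unfolding borel_Pi_def by (intro CollectI exI[of _ "topspace X - B"]) (simp add: double_diff)
qed

lemma Diff_in_borel_Pi_iff:
  "A \<subseteq> topspace X \<Longrightarrow> topspace X - A \<in> borel_Pi X \<nu> \<longleftrightarrow> A \<in> borel_Sigma X \<nu>"
  by (simp add: borel_Pi_iff double_diff)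

lemma borel_Pi_less_in_Sigma:
  fixes \<xi> \<nu> :: "'o::wellorder"
  assumes "\<not> ord_zero \<xi>" "\<not> ord_one \<xi>" "\<nu> < \<xi>" "A \<in> borel_Pi X \<nu>"
  shows "A \<in> borel_Sigma X \<xi>"
proof -
  have "\<exists>\<mu> < \<xi>. \<not> ord_zero \<mu> \<and> A \<in> borel_Pi X \<mu>"
  proof (cases "ord_zero \<nu>")
    case True
    text \<open>A clopen set is closed, so it lies in \<open>\<Pi>\<^sub>1\<close>, and \<open>1 < \<xi>\<close>.\<close>
    obtain \<omega> where \<omega>: "\<omega> < \<xi>" "ord_one \<omega>"
      using ex_ord_one_less assms(1,2) by blast
    have "A \<in> borel_Pi X \<omega>"
      using assms(4) \<omega>(2) True by (auto simp: borel_Pi_iff borel_Sigma_zero borel_Sigma_one)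
    then show ?thesis
      using \<omega> ord_one_not_zero by blast
  qed (use assms in blast)
  then show ?thesis
    using assms(1,2) by (auto simp: borel_Sigma_iff intro!: exI[of _ "\<lambda>_. A"])
qed

lemma borel_Sigma_mono:
  fixes \<xi> \<nu> :: "'o::wellorder"
  assumes X: "metrizable_space X" and \<xi>: "\<not> ord_zero \<xi>" "\<not> ord_one \<xi>"
    and "\<nu> < \<xi>" and A: "A \<in> borel_Sigma X \<nu>"
  shows "A \<in> borel_Sigma X \<xi>"
proof -
  consider "ord_zero \<nu>" | "ord_one \<nu>" | "\<not> ord_zero \<nu>" "\<not> ord_one \<nu>"
    by blast
  then show ?thesis
  proof cases
    case 1
    then have "openin X A" "closedin X A"
      using A by (simp_all add: borel_Sigma_zero)
    then have "topspace X - A \<in> borel_Sigma X \<nu>"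
      using 1 by (simp add: borel_Sigma_zero openin_diff closedin_diff)
    then have "A \<in> borel_Pi X \<nu>"
      using \<open>openin X A\<close> by (simp add: borel_Pi_iff openin_subset)
    then show ?thesis
      by (rule borel_Pi_less_in_Sigma[OF \<xi> \<open>\<nu> < \<xi>\<close>])
  next
    case 2
    then have "fsigma_in X A"
      using A X open_imp_fsigma_in by (simp add: borel_Sigma_one)
    then obtain C :: "nat \<Rightarrow> 'a set" where C: "\<And>n. closedin X (C n)" "\<Union> (range C) = A"
      unfolding fsigma_in_ascending by blast
    have "C n \<in> borel_Pi X \<nu>" for n
      using C(1) 2 by (simp add: borel_Pi_iff borel_Sigma_one openin_diff closedin_subset)
    moreover have "\<not> ord_zero \<nu>"
      using 2 by (rule ord_one_not_zero)
    ultimately show ?thesis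
      unfolding borel_Sigma_iff[OF \<xi>] using C(2) \<open>\<nu> < \<xi>\<close> by blast
  next
    case 3
    then obtain U :: "nat \<Rightarrow> 'a set" where U:
      "A = \<Union> (range U)" "\<forall>n. \<exists>\<mu> < \<nu>. \<not> ord_zero \<mu> \<and> U n \<in> borel_Pi X \<mu>"
      using A unfolding borel_Sigma_iff[OF 3] by blast
    have "\<exists>\<mu> < \<xi>. \<not> ord_zero \<mu> \<and> U n \<in> borel_Pi X \<mu>" for n
      using U(2) \<open>\<nu> < \<xi>\<close> by (meson less_trans)
    then show ?thesis
      unfolding borel_Sigma_iff[OF \<xi>] using U(1) by blast
  qed
qed

lemma borel_Sigma_less_in_Delta:
  fixes \<xi> \<nu> :: "'o::wellorder"
  assumes "metrizable_space X" "\<not> ord_zero \<xi>" "\<not> ord_one \<xi>" "\<nu> < \<xi>" "A \<in> borel_Sigma X \<nu>"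
  shows "A \<in> borel_Delta X \<xi>"
proof -
  have "topspace X - A \<in> borel_Pi X \<nu>"
    using assms(5) by (auto simp: borel_Pi_def)
  then have "topspace X - A \<in> borel_Sigma X \<xi>"
    by (rule borel_Pi_less_in_Sigma[OF assms(2-4)])
  then show ?thesis
    using borel_Sigma_mono[OF assms] borel_Sigma_subset_topspace[OF assms(5)]
    by (simp add: borel_Delta_def borel_Pi_iff)
qed

lemma borel_Sigma_countable_Union:
  fixes \<xi> :: "'o::wellorder" and A :: "nat \<Rightarrow> 'a set"
  assumes \<xi>: "\<not> ord_zero \<xi>" "\<not> ord_one \<xi>" and A: "\<And>n. A n \<in> borel_Sigma X \<xi>"
  shows "\<Union> (range A) \<in> borel_Sigma X \<xi>"
proof -
  obtain U :: "nat \<Rightarrow> nat \<Rightarrow> 'a set" where U: "\<And>n. A n = \<Union> (range (U n))"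
    "\<And>n m. \<exists>\<mu> < \<xi>. \<not> ord_zero \<mu> \<and> U n m \<in> borel_Pi X \<mu>"
    using A unfolding borel_Sigma_iff[OF \<xi>] by metis
  define V where "V = case_prod U \<circ> prod_decode"
  have "\<Union> (range A) = \<Union> (range V)"
    unfolding V_def image_comp[symmetric] surj_prod_decode U by auto
  moreover have "\<exists>\<mu> < \<xi>. \<not> ord_zero \<mu> \<and> V k \<in> borel_Pi X \<mu>" for k
    using U(2) by (simp add: V_def split: prod.split)
  ultimately show ?thesis
    unfolding borel_Sigma_iff[OF \<xi>] by blast
qed

lemma preimage_topspace_Diff:
  "f \<in> topspace X \<rightarrow> topspace Y \<Longrightarrow>
    {x \<in> topspace X. f x \<in> topspace Y - B} = topspace X - {x \<in> topspace X. f x \<in> B}"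
  by auto

lemma preimage_borel_Sigma_iff_Pi:
  assumes f: "f \<in> topspace X \<rightarrow> topspace Y"
  shows "(\<forall>A \<in> borel_Sigma Y \<xi>. {x \<in> topspace X. f x \<in> A} \<in> borel_Sigma X \<xi>)
     \<longleftrightarrow> (\<forall>A \<in> borel_Pi Y \<xi>. {x \<in> topspace X. f x \<in> A} \<in> borel_Pi X \<xi>)"
proof -
  have compl: "{x \<in> topspace X. f x \<in> topspace Y - B} \<in> borel_Pi X \<xi>
      \<longleftrightarrow> {x \<in> topspace X. f x \<in> B} \<in> borel_Sigma X \<xi>" for B
    unfolding preimage_topspace_Diff[OF f] by (rule Diff_in_borel_Pi_iff) auto
  show ?thesis
  proof (intro iffI ballI)
    fix A assume Sigma_preimage: "\<forall>B \<in> borel_Sigma Y \<xi>. {x \<in> topspace X. f x \<in> B} \<in> borel_Sigma X \<xi>"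
      and "A \<in> borel_Pi Y \<xi>"
    then obtain B where "B \<in> borel_Sigma Y \<xi>" "A = topspace Y - B"
      by (auto simp: borel_Pi_def)
    then show "{x \<in> topspace X. f x \<in> A} \<in> borel_Pi X \<xi>"
      using Sigma_preimage compl by simp
  next
    fix B assume Pi_preimage: "\<forall>A \<in> borel_Pi Y \<xi>. {x \<in> topspace X. f x \<in> A} \<in> borel_Pi X \<xi>"
      and "B \<in> borel_Sigma Y \<xi>"
    then have "topspace Y - B \<in> borel_Pi Y \<xi>"
      by (auto simp: borel_Pi_def)
    then show "{x \<in> topspace X. f x \<in> B} \<in> borel_Sigma X \<xi>"
      using Pi_preimage compl by blast
  qed
qed

lemma preimage_borel_Sigma_less_Delta_imp_Pi_less_Sigma:
  fixes \<xi> :: "'o::wellorder"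
  assumes f: "f \<in> topspace X \<rightarrow> topspace Y"
    and Delta: "\<forall>\<nu> < \<xi>. \<forall>A \<in> borel_Sigma Y \<nu>. {x \<in> topspace X. f x \<in> A} \<in> borel_Delta X \<xi>"
  shows "\<forall>\<nu> < \<xi>. \<forall>A \<in> borel_Pi Y \<nu>. {x \<in> topspace X. f x \<in> A} \<in> borel_Sigma X \<xi>"
proof (intro allI impI ballI)
  fix \<nu> A assume "\<nu> < \<xi>" "A \<in> borel_Pi Y \<nu>"
  then obtain B where B: "B \<in> borel_Sigma Y \<nu>" "A = topspace Y - B"
    by (auto simp: borel_Pi_def)
  have "{x \<in> topspace X. f x \<in> B} \<in> borel_Pi X \<xi>"
    using Delta \<open>\<nu> < \<xi>\<close> B(1) by (simp add: borel_Delta_def)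
  then have "topspace X - {x \<in> topspace X. f x \<in> B} \<in> borel_Sigma X \<xi>"
    unfolding borel_Pi_iff ..
  then show "{x \<in> topspace X. f x \<in> A} \<in> borel_Sigma X \<xi>"
    unfolding B(2) preimage_topspace_Diff[OF f] .
qed

lemma preimage_borel_Pi_less_Sigma_imp_Sigma:
  fixes \<xi> :: "'o::wellorder"
  assumes \<xi>: "\<not> ord_zero \<xi>" "\<not> ord_one \<xi>"
    and f: "\<forall>\<nu> < \<xi>. \<forall>A \<in> borel_Pi Y \<nu>. {x \<in> topspace X. f x \<in> A} \<in> borel_Sigma X \<xi>"
  shows "\<forall>A \<in> borel_Sigma Y \<xi>. {x \<in> topspace X. f x \<in> A} \<in> borel_Sigma X \<xi>"
proof
  fix A assume "A \<in> borel_Sigma Y \<xi>"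
  then obtain U :: "nat \<Rightarrow> _" where U: "A = \<Union> (range U)"
    "\<And>n. \<exists>\<mu> < \<xi>. \<not> ord_zero \<mu> \<and> U n \<in> borel_Pi Y \<mu>"
    unfolding borel_Sigma_iff[OF \<xi>] by blast
  have "\<Union> (range (\<lambda>n. {x \<in> topspace X. f x \<in> U n})) \<in> borel_Sigma X \<xi>"
    using \<xi> by (rule borel_Sigma_countable_Union) (use U(2) f in blast)
  moreover have "{x \<in> topspace X. f x \<in> A} = (\<Union>n. {x \<in> topspace X. f x \<in> U n})"
    unfolding U(1) by auto
  ultimately show "{x \<in> topspace X. f x \<in> A} \<in> borel_Sigma X \<xi>"
    by simp
qed

theorem mainTheorem7:
  fixes X :: "'a topology" and Y :: "'b topology" and f :: "'a \<Rightarrow> 'b"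
    and \<xi> :: "'o::wellorder"
  assumes "metrizable_space X" and "metrizable_space Y"
    and "f \<in> topspace X \<rightarrow> topspace Y"
    and "countable {..<\<xi>}"
    and "\<not> ord_zero \<xi>" and "\<not> ord_one \<xi>"
  shows "((\<forall>A \<in> borel_Sigma Y \<xi>. {x \<in> topspace X. f x \<in> A} \<in> borel_Sigma X \<xi>)
          \<longleftrightarrow> (\<forall>A \<in> borel_Pi Y \<xi>. {x \<in> topspace X. f x \<in> A} \<in> borel_Pi X \<xi>))
       \<and> ((\<forall>A \<in> borel_Sigma Y \<xi>. {x \<in> topspace X. f x \<in> A} \<in> borel_Sigma X \<xi>)
          \<longleftrightarrow> (\<forall>A \<in> borel_Delta Y \<xi>. {x \<in> topspace X. f x \<in> A} \<in> borel_Delta X \<xi>))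
       \<and> ((\<forall>A \<in> borel_Sigma Y \<xi>. {x \<in> topspace X. f x \<in> A} \<in> borel_Sigma X \<xi>)
          \<longleftrightarrow> (\<forall>\<nu> < \<xi>. \<forall>A \<in> borel_Pi Y \<nu>. {x \<in> topspace X. f x \<in> A} \<in> borel_Sigma X \<xi>))
       \<and> ((\<forall>A \<in> borel_Sigma Y \<xi>. {x \<in> topspace X. f x \<in> A} \<in> borel_Sigma X \<xi>)
          \<longleftrightarrow> (\<forall>\<nu> < \<xi>. \<forall>A \<in> borel_Sigma Y \<nu>. {x \<in> topspace X. f x \<in> A} \<in> borel_Delta X \<xi>))"
  (is "(?S \<longleftrightarrow> ?P) \<and> (?S \<longleftrightarrow> ?D) \<and> (?S \<longleftrightarrow> ?PS) \<and> (?S \<longleftrightarrow> ?SD)")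
proof -
  have SP: "?S \<longleftrightarrow> ?P"
    using assms(3) by (rule preimage_borel_Sigma_iff_Pi)
  have SD: "?S \<Longrightarrow> ?D"
    using SP by (auto simp: borel_Delta_def)
  have DSD: "?D \<Longrightarrow> ?SD"
    using borel_Sigma_less_in_Delta[OF assms(2,5,6)] by blast
  have SDPS: "?SD \<Longrightarrow> ?PS"
    using assms(3) by (rule preimage_borel_Sigma_less_Delta_imp_Pi_less_Sigma)
  have PSS: "?PS \<Longrightarrow> ?S"
    using assms(5,6) by (rule preimage_borel_Pi_less_Sigma_imp_Sigma)
  show ?thesis
    using SP SD DSD SDPS PSS by blast
qed

end
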